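(* Let \(G=(V,E)\) be a connected split graph with clique \(C\) and independent set \(I\), and let \(T\) be a spanning tree of \(G\). Let \(X\) be any one of the searches MNS, MCS, LDFS, LBFS. Then \(T\) is the \(\mathcal{L}\)-tree of some \(X\) ordering of \(G\) if and only if there exist a partition \(V=L\cup V(P)\) and a path \(P=(v_1,\dots,v_k)\) in \(T\) such that: (1) \(T\) is a caterpillar tree consisting of the set of leaves \(L\) and the dominating path \(P\), and \(P\) contains every vertex of \(C\); (2) for every leaf \(w\in L\) whose neighbor in \(T\) is \(v_i\), we have \(wv_j\notin E\) for all \(j>i\); (3) for every \(v_i\in I\cap V(P)\), with \(l:=|\{v_1,\dots,v_{i-1}\}\cap C|\): (a) \(\{v_1,\dots,v_{i-1}\}\cap C\subseteq N(v_i)\), and (b) \(\{v_{i+1},\dots,v_{i+\deg(v_i)-l}\}\subseteq N(v_i)\).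
   Context: A split graph is a graph whose vertex set can be partitioned into a clique \(C\) and an independent set \(I\). A tree is a caterpillar if it has a dominating path, i.e., a path such that every vertex is on it or adjacent to a vertex on it. \(\deg(v)=|N(v)|\) in \(G\). With \(n=|V|\): an LBFS ordering is produced by starting with label \((n)\) on a start vertex \(s\), empty labels elsewhere, and for \(i=1,\dots,n\) picking an unnumbered vertex of lexicographically largest label as \(v_i\) and appending \(n-i\) to the labels of its unnumbered neighbors. An LDFS ordering is produced similarly with \(s\) labelled \((0)\), others empty, and prepending \(i\) instead. An MCS ordering is produced by repeatedly choosing an unnumbered vertex with the most numbered neighbors. An MNS ordering uses set labels: all \(\emptyset\), \(s\) gets \(\{n+1\}\); repeatedly pick an unnumbered vertex with inclusion-maximal label as \(v_i\) and add \(i\) to the labels of its unnumbered neighbors. Ties are broken arbitrarily. The \(\mathcal{L}\)-tree of an ordering \(\sigma=(u_1,\dots,u_n)\) is the tree on \(V\) containing, for each \(i\ge2\), the edge from \(u_i\) to its rightmost neighbor \(u_j\) with \(j<i\). *)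

theory Defs
  imports Main
begin

definition adj :: "'a set set \<Rightarrow> 'a \<Rightarrow> 'a \<Rightarrow> bool" where
  "adj E u v \<longleftrightarrow> {u, v} \<in> E"

definition graph :: "'a set \<Rightarrow> 'a set set \<Rightarrow> bool" where
  "graph V E \<longleftrightarrow> finite V \<and> (\<forall>e\<in>E. \<exists>u v. e = {u, v} \<and> u \<noteq> v \<and> u \<in> V \<and> v \<in> V)"

definition nbhd :: "'a set set \<Rightarrow> 'a \<Rightarrow> 'a set" where
  "nbhd E v = {u. adj E v u}"

definition deg :: "'a set set \<Rightarrow> 'a \<Rightarrow> nat" where
  "deg E v = card (nbhd E v)"

definition connected :: "'a set \<Rightarrow> 'a set set \<Rightarrow> bool" where
  "connected V E \<longleftrightarrow> V \<noteq> {} \<and> (\<forall>u\<in>V. \<forall>v\<in>V. (adj E)\<^sup>*\<^sup>* u v)"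

definition is_path :: "'a set set \<Rightarrow> 'a list \<Rightarrow> bool" where
  "is_path E P \<longleftrightarrow> P \<noteq> [] \<and> distinct P \<and> (\<forall>i. Suc i < length P \<longrightarrow> adj E (P ! i) (P ! Suc i))"

definition has_cycle :: "'a set set \<Rightarrow> bool" where
  "has_cycle E \<longleftrightarrow> (\<exists>c. length c \<ge> 3 \<and> is_path E c \<and> adj E (last c) (hd c))"

definition is_tree :: "'a set \<Rightarrow> 'a set set \<Rightarrow> bool" where
  "is_tree V T \<longleftrightarrow> graph V T \<and> connected V T \<and> \<not> has_cycle T"

definition spanning_tree :: "'a set \<Rightarrow> 'a set set \<Rightarrow> 'a set set \<Rightarrow> bool" where
  "spanning_tree V E T \<longleftrightarrow> T \<subseteq> E \<and> is_tree V T"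

definition split_graph :: "'a set \<Rightarrow> 'a set set \<Rightarrow> 'a set \<Rightarrow> 'a set \<Rightarrow> bool" where
  "split_graph V E C I \<longleftrightarrow> graph V E \<and> C \<inter> I = {} \<and> C \<union> I = V \<and>
     (\<forall>u\<in>C. \<forall>v\<in>C. u \<noteq> v \<longrightarrow> adj E u v) \<and> (\<forall>u\<in>I. \<forall>v\<in>I. \<not> adj E u v)"

text \<open>An ordering sigma = (u_1,...,u_n) is a list; 0-based list index j corresponds to number j+1.\<close>
definition is_ordering :: "'a set \<Rightarrow> 'a list \<Rightarrow> bool" where
  "is_ordering V \<sigma> \<longleftrightarrow> distinct \<sigma> \<and> set \<sigma> = V"

definition lex_less :: "nat list \<Rightarrow> nat list \<Rightarrow> bool" where
  "lex_less xs ys \<longleftrightarrow> (xs, ys) \<in> lexord {(a, b). a < b}"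

definition earlier_nbrs :: "'a set set \<Rightarrow> 'a list \<Rightarrow> nat \<Rightarrow> 'a \<Rightarrow> nat list" where
  "earlier_nbrs E \<sigma> i u = filter (\<lambda>j. adj E (\<sigma> ! j) u) [0..<i]"

text \<open>Labels of an unnumbered vertex u just before the (i+1)-st vertex is chosen, start vertex s.\<close>
definition lbfs_label :: "'a set set \<Rightarrow> 'a list \<Rightarrow> 'a \<Rightarrow> nat \<Rightarrow> 'a \<Rightarrow> nat list" where
  "lbfs_label E \<sigma> s i u = (if u = s then [length \<sigma>] else []) @
      map (\<lambda>j. length \<sigma> - Suc j) (earlier_nbrs E \<sigma> i u)"

definition ldfs_label :: "'a set set \<Rightarrow> 'a list \<Rightarrow> 'a \<Rightarrow> nat \<Rightarrow> 'a \<Rightarrow> nat list" where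
  "ldfs_label E \<sigma> s i u = rev (map Suc (earlier_nbrs E \<sigma> i u)) @ (if u = s then [0] else [])"

definition mns_label :: "'a set set \<Rightarrow> 'a list \<Rightarrow> 'a \<Rightarrow> nat \<Rightarrow> 'a \<Rightarrow> nat set" where
  "mns_label E \<sigma> s i u = Suc ` set (earlier_nbrs E \<sigma> i u) \<union> (if u = s then {Suc (length \<sigma>)} else {})"

definition mcs_label :: "'a set set \<Rightarrow> 'a list \<Rightarrow> nat \<Rightarrow> 'a \<Rightarrow> nat" where
  "mcs_label E \<sigma> i u = length (earlier_nbrs E \<sigma> i u)"

definition lbfs_ordering :: "'a set \<Rightarrow> 'a set set \<Rightarrow> 'a list \<Rightarrow> bool" where
  "lbfs_ordering V E \<sigma> \<longleftrightarrow> is_ordering V \<sigma> \<and> (\<exists>s\<in>V. \<forall>i k. i \<le> k \<and> k < length \<sigma> \<longrightarrow>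
      \<not> lex_less (lbfs_label E \<sigma> s i (\<sigma> ! i)) (lbfs_label E \<sigma> s i (\<sigma> ! k)))"

definition ldfs_ordering :: "'a set \<Rightarrow> 'a set set \<Rightarrow> 'a list \<Rightarrow> bool" where
  "ldfs_ordering V E \<sigma> \<longleftrightarrow> is_ordering V \<sigma> \<and> (\<exists>s\<in>V. \<forall>i k. i \<le> k \<and> k < length \<sigma> \<longrightarrow>
      \<not> lex_less (ldfs_label E \<sigma> s i (\<sigma> ! i)) (ldfs_label E \<sigma> s i (\<sigma> ! k)))"

definition mns_ordering :: "'a set \<Rightarrow> 'a set set \<Rightarrow> 'a list \<Rightarrow> bool" where
  "mns_ordering V E \<sigma> \<longleftrightarrow> is_ordering V \<sigma> \<and> (\<exists>s\<in>V. \<forall>i k. i \<le> k \<and> k < length \<sigma> \<longrightarrow>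
      \<not> (mns_label E \<sigma> s i (\<sigma> ! i) \<subset> mns_label E \<sigma> s i (\<sigma> ! k)))"

definition mcs_ordering :: "'a set \<Rightarrow> 'a set set \<Rightarrow> 'a list \<Rightarrow> bool" where
  "mcs_ordering V E \<sigma> \<longleftrightarrow> is_ordering V \<sigma> \<and> (\<forall>i k. i \<le> k \<and> k < length \<sigma> \<longrightarrow>
      mcs_label E \<sigma> i (\<sigma> ! k) \<le> mcs_label E \<sigma> i (\<sigma> ! i))"

datatype search = MNS | MCS | LDFS | LBFS

fun search_ordering :: "search \<Rightarrow> 'a set \<Rightarrow> 'a set set \<Rightarrow> 'a list \<Rightarrow> bool" where
  "search_ordering MNS = mns_ordering"
| "search_ordering MCS = mcs_ordering"
| "search_ordering LDFS = ldfs_ordering"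
| "search_ordering LBFS = lbfs_ordering"

definition ltree :: "'a set set \<Rightarrow> 'a list \<Rightarrow> 'a set set" where
  "ltree E \<sigma> = {{\<sigma> ! i, \<sigma> ! j} | i j. i < length \<sigma> \<and> j < i \<and> adj E (\<sigma> ! j) (\<sigma> ! i) \<and>
      (\<forall>k. j < k \<and> k < i \<longrightarrow> \<not> adj E (\<sigma> ! k) (\<sigma> ! i))}"

end

(*
  Every vertex that MNS, MCS, LDFS or LBFS numbers has an inclusion-maximal set of numbered
  neighbours, so for the forward direction it suffices to study MNS orderings. In an MNS
  ordering of a split graph an independent vertex is only chosen once it sees every numbered
  clique vertex, no earlier independent vertex has an unnumbered neighbour, and its own later
  neighbours form a block of clique vertices directly after it. Consequently the start vertex,
  the clique and the vertices having a child in the L-tree form a path of the L-tree; every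
  other vertex is a leaf all of whose spine neighbours precede its parent (a later one would,
  by the block property, give it a child), and counting neighbours yields condition (3).

  Conversely, let the ordering list the path P first and then the leaves, a leaf with the most
  preferred set of path neighbours first. Along P, condition (3) makes every earlier path
  vertex adjacent to a later vertex also adjacent to the next path vertex, so the next path
  vertex always has a maximal label; condition (2) makes the tree neighbour of a leaf its
  rightmost earlier neighbour, so the L-tree is T.
*)

theory Submission
  imports Defs
begin

lemma sorted_wrt_less_nth_less_iff:
  fixes xs :: "'b::linorder list"
  assumes "sorted_wrt (<) xs" "i < length xs" "j < length xs"
  shows "xs ! i < xs ! j \<longleftrightarrow> i < j"
  using assms sorted_wrt_nth_less by (metis linorder_neqE_nat order_less_asym)

lemma set_take_sorted_wrt_less:
  fixes xs :: "'b::linorder list"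
  assumes "sorted_wrt (<) xs" "m < length xs"
  shows "set (take m xs) = {x \<in> set xs. x < xs ! m}"
proof (intro equalityI subsetI)
  fix x assume "x \<in> set (take m xs)"
  then obtain q where "q < m" "x = xs ! q"
    using assms(2) by (auto simp: in_set_conv_nth)
  then show "x \<in> {x \<in> set xs. x < xs ! m}"
    using assms sorted_wrt_less_nth_less_iff by fastforce
next
  fix x assume "x \<in> {x \<in> set xs. x < xs ! m}"
  then obtain q where q: "q < length xs" "x = xs ! q" "xs ! q < xs ! m"
    by (auto simp: in_set_conv_nth)
  then have "q < m"
    using assms sorted_wrt_less_nth_less_iff by blast
  then show "x \<in> set (take m xs)"
    using q(1,2) by (auto simp: in_set_conv_nth intro!: exI[of _ q])
qed

lemma sorted_wrt_less_nth_interval: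
  fixes xs :: "nat list"
  assumes "sorted_wrt (<) xs" "m < length xs" "{xs ! m<..xs ! m + r} \<subseteq> set xs" "t \<le> r"
  shows "m + t < length xs \<and> xs ! (m + t) = xs ! m + t"
  using assms(4)
proof (induction t)
  case 0
  then show ?case using assms(2) by simp
next
  case (Suc t)
  then have IH: "m + t < length xs" "xs ! (m + t) = xs ! m + t" by auto
  have "xs ! m + Suc t \<in> set xs"
    using assms(3) Suc.prems by auto
  then obtain q where q: "q < length xs" "xs ! q = xs ! m + Suc t"
    by (auto simp: in_set_conv_nth)
  then have "m + t < q"
    using sorted_wrt_less_nth_less_iff[OF assms(1) IH(1) q(1)] IH(2) by simp
  then have len: "m + Suc t < length xs"
    using q(1) by simp
  have "xs ! (m + Suc t) \<le> xs ! q"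
    using sorted_wrt_less_nth_less_iff[OF assms(1) q(1) len] \<open>m + t < q\<close> by simp
  moreover have "xs ! (m + t) < xs ! (m + Suc t)"
    using sorted_wrt_less_nth_less_iff[OF assms(1) IH(1) len] by simp
  ultimately show ?case
    using IH(2) q(2) len by simp
qed

lemma set_take_eq_image_nth: "j \<le> length xs \<Longrightarrow> set (take j xs) = (!) xs ` {..<j}"
  by (auto simp: set_conv_nth image_iff) (metis nth_take)

lemma lexord_if_psubset_sorted_desc:
  fixes xs ys :: "'b::linorder list"
  assumes "sorted_wrt (>) xs" "sorted_wrt (>) ys" "set xs \<subset> set ys"
  shows "(xs, ys) \<in> lexord {(a, b). a < b}"
  using assms
proof (induction ys arbitrary: xs)
  case Nil
  then show ?case by simp
next
  case (Cons y ys)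
  show ?case
  proof (cases xs)
    case Nil
    then show ?thesis by simp
  next
    case (Cons x xs')
    have "x \<in> set (y # ys)" using Cons.prems(3) \<open>xs = x # xs'\<close> by auto
    show ?thesis
    proof (cases "x = y")
      case False
      then have "x < y" using \<open>x \<in> set (y # ys)\<close> Cons.prems(2) by auto
      then show ?thesis using \<open>xs = x # xs'\<close> by simp
    next
      case True
      have "set xs' \<subset> set ys"
        using Cons.prems True \<open>xs = x # xs'\<close> by auto
      then have "(xs', ys) \<in> lexord {(a, b). a < b}"
        using Cons.IH Cons.prems(1,2) \<open>xs = x # xs'\<close> by simp
      then show ?thesis using True \<open>xs = x # xs'\<close> by simp
    qed
  qed
qed

lemma ex_maximal_element:
  assumes "finite W" "W \<noteq> {}" "irreflp R" "transp R"
  shows "\<exists>m\<in>W. \<forall>y\<in>W. \<not> R m y"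
  using assms(1,2)
proof (induction W rule: finite_ne_induct)
  case (singleton x)
  then show ?case using irreflpD[OF assms(3)] by simp
next
  case (insert x F)
  then obtain m where m: "m \<in> F" "\<forall>y\<in>F. \<not> R m y" by blast
  show ?case
  proof (cases "R m x")
    case True
    have "\<not> R x y" if "y \<in> insert x F" for y
    proof
      assume "R x y"
      then have "y \<in> F"
        using that irreflpD[OF assms(3), of x] by auto
      then show False
        using m(2) transpD[OF assms(4) True \<open>R x y\<close>] by blast
    qed
    then show ?thesis by blast
  next
    case False
    then show ?thesis using m by blast
  qed
qed

lemma ex_enumeration_maximal_first:
  assumes "finite W" "irreflp R" "transp R"
  shows "\<exists>ws. distinct ws \<and> set ws = W \<and> sorted_wrt (\<lambda>x y. \<not> R x y) ws"
  using assms(1)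
proof (induction W rule: finite_psubset_induct)
  case (psubset W)
  show ?case
  proof (cases "W = {}")
    case True
    then show ?thesis by (intro exI[of _ "[]"]) simp
  next
    case False
    obtain m where m: "m \<in> W" "\<forall>y\<in>W. \<not> R m y"
      using ex_maximal_element[OF psubset.hyps False assms(2,3)] by blast
    then obtain ws where "distinct ws" "set ws = W - {m}" "sorted_wrt (\<lambda>x y. \<not> R x y) ws"
      using psubset.IH[of "W - {m}"] by blast
    then show ?thesis
      using m by (intro exI[of _ "m # ws"]) auto
  qed
qed

lemma adj_commute: "adj E u v \<longleftrightarrow> adj E v u"
  by (simp add: adj_def insert_commute)

lemma graph_adjD:
  assumes "graph V E" "adj E u v"
  shows "u \<in> V" "v \<in> V" "u \<noteq> v"
proof -
  obtain a b where "{u, v} = {a, b}" "a \<noteq> b" "a \<in> V" "b \<in> V"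
    using assms by (auto simp: graph_def adj_def)
  then show "u \<in> V" "v \<in> V" "u \<noteq> v" by (auto simp: doubleton_eq_iff)
qed

lemma finite_nbhd:
  assumes "graph V E"
  shows "finite (nbhd E v)"
proof (rule finite_subset)
  show "nbhd E v \<subseteq> V" using graph_adjD(2)[OF assms] by (auto simp: nbhd_def)
  show "finite V" using assms by (simp add: graph_def)
qed

lemma split_graph_graph: "split_graph V E C I \<Longrightarrow> graph V E"
  by (simp add: split_graph_def)

lemma split_graph_C_iff_not_I: "split_graph V E C I \<Longrightarrow> v \<in> V \<Longrightarrow> v \<in> C \<longleftrightarrow> v \<notin> I"
  by (auto simp: split_graph_def)

lemma split_graph_clique_adj:
  "split_graph V E C I \<Longrightarrow> u \<in> C \<Longrightarrow> v \<in> C \<Longrightarrow> u \<noteq> v \<Longrightarrow> adj E u v"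
  by (simp add: split_graph_def)

lemma split_graph_indep_not_adj: "split_graph V E C I \<Longrightarrow> u \<in> I \<Longrightarrow> v \<in> I \<Longrightarrow> \<not> adj E u v"
  by (simp add: split_graph_def)

lemma split_graph_adj_indep:
  assumes "split_graph V E C I" "adj E u v" "u \<in> I"
  shows "v \<in> C"
  using assms graph_adjD(2)[OF split_graph_graph[OF assms(1)] assms(2)]
  by (auto simp: split_graph_def)

section \<open>Searches as comparisons of sets of earlier neighbours\<close>

definition earlier_adj :: "'a set set \<Rightarrow> 'a list \<Rightarrow> nat \<Rightarrow> 'a \<Rightarrow> nat set" where
  "earlier_adj E \<sigma> i u = {j. j < i \<and> adj E (\<sigma> ! j) u}"

lemma earlier_adj_subset: "earlier_adj E \<sigma> i u \<subseteq> {..<i}"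
  by (auto simp: earlier_adj_def)

lemma finite_earlier_adj [simp]: "finite (earlier_adj E \<sigma> i u)"
  by (rule finite_subset[OF earlier_adj_subset]) simp

lemma earlier_adj_0 [simp]: "earlier_adj E \<sigma> 0 u = {}"
  by (simp add: earlier_adj_def)

lemma set_earlier_nbrs: "set (earlier_nbrs E \<sigma> i u) = earlier_adj E \<sigma> i u"
  by (auto simp: earlier_nbrs_def earlier_adj_def)

lemma earlier_nbrs_eq_sorted_list_of_set:
  "earlier_nbrs E \<sigma> i u = sorted_list_of_set (earlier_adj E \<sigma> i u)"
proof -
  have "sorted_wrt (<) (earlier_nbrs E \<sigma> i u)"
    unfolding earlier_nbrs_def by (rule sorted_wrt_filter) (simp add: sorted_wrt_upt)
  then show ?thesis
    by (simp flip: set_earlier_nbrs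
        add: sorted_list_of_set_sort_remdups strict_sorted_iff distinct_remdups_id sorted_sort_id)
qed

text \<open>When the vertex number \<open>i + 1\<close> is chosen, every vertex other than the start vertex
  carries a label determined by the set \<open>A\<close> of indices \<open>j < i\<close> of its numbered neighbours
  (and by the number \<open>n\<close> of vertices); \<open>label_less X n A B\<close> says that search \<open>X\<close>
  strictly prefers the label of \<open>B\<close>.\<close>

fun label_less :: "search \<Rightarrow> nat \<Rightarrow> nat set \<Rightarrow> nat set \<Rightarrow> bool" where
  "label_less MNS n A B \<longleftrightarrow> A \<subset> B"
| "label_less MCS n A B \<longleftrightarrow> card A < card B"
| "label_less LBFS n A B \<longleftrightarrow>
     lex_less (map (\<lambda>j. n - Suc j) (sorted_list_of_set A)) (map (\<lambda>j. n - Suc j) (sorted_list_of_set B))"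
| "label_less LDFS n A B \<longleftrightarrow>
     lex_less (rev (map Suc (sorted_list_of_set A))) (rev (map Suc (sorted_list_of_set B)))"

lemma label_less_irrefl: "\<not> label_less X n A A"
  by (cases X) (auto simp: lex_less_def lexord_irreflexive)

lemma label_less_trans:
  assumes "label_less X n A B" "label_less X n B D"
  shows "label_less X n A D"
proof -
  have "trans {(a :: nat, b). a < b}" by (auto intro: transI)
  then show ?thesis
    using assms by (cases X) (simp_all add: lex_less_def lexord_trans)
qed

lemma label_less_if_psubset:
  assumes "A \<subset> B" "B \<subseteq> {..<n}"
  shows "label_less X n A B"
proof -
  have "finite B"
    using assms(2) by (rule finite_subset) simp
  then have "finite A"
    using assms(1) by (meson finite_subset psubset_imp_subset)
  show ?thesis
  proof (cases X)
    case LBFS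
    let ?f = "\<lambda>j. n - Suc j"
    have desc: "sorted_wrt (>) (map ?f (sorted_list_of_set S))" if "S \<subseteq> {..<n}" for S
    proof -
      have "finite S" using that by (rule finite_subset) simp
      then show ?thesis
        unfolding sorted_wrt_map
        by (intro sorted_wrt_mono_rel[OF _ strict_sorted_list_of_set]) (use that in auto)
    qed
    have "inj_on ?f B"
    proof (rule inj_onI)
      fix x y assume "x \<in> B" "y \<in> B" "n - Suc x = n - Suc y"
      moreover from \<open>x \<in> B\<close> \<open>y \<in> B\<close> have "x < n" "y < n" using assms(2) by auto
      ultimately show "x = y" by linarith
    qed
    then have "?f ` A \<subset> ?f ` B"
      using assms(1) by (rule image_strict_mono)
    then show ?thesis
      using LBFS desc assms \<open>finite A\<close> \<open>finite B\<close>
      by (simp add: lex_less_def lexord_if_psubset_sorted_desc)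
  next
    case LDFS
    have "Suc ` A \<subset> Suc ` B"
      by (rule image_strict_mono[OF inj_on_subset[OF inj_Suc subset_UNIV] assms(1)])
    then show ?thesis
      using LDFS \<open>finite A\<close> \<open>finite B\<close>
      by (simp add: lex_less_def lexord_if_psubset_sorted_desc sorted_wrt_rev sorted_wrt_map strict_sorted_list_of_set)
  qed (use assms \<open>finite B\<close> in \<open>auto intro: psubset_card_mono\<close>)
qed

lemma not_label_less_if_subset: "A \<subseteq> B \<Longrightarrow> B \<subseteq> {..<n} \<Longrightarrow> \<not> label_less X n B A"
  by (metis label_less_irrefl label_less_if_psubset label_less_trans psubsetI)

text \<open>The extra label entry of the start vertex makes it the first vertex of the ordering;
  afterwards it no longer competes, so only the sets of earlier neighbours matter.\<close>

lemma start_search_iff: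
  fixes lab :: "'a \<Rightarrow> nat \<Rightarrow> 'a \<Rightarrow> 'l" and f :: "nat set \<Rightarrow> 'l"
  assumes ord: "is_ordering V \<sigma>" and "\<sigma> \<noteq> []"
    and lab: "\<And>s i u. u \<noteq> s \<Longrightarrow> lab s i u = f (earlier_adj E \<sigma> i u)"
    and lab_start: "\<And>s. lab s 0 s = a"
    and "lt (f {}) a" "\<not> lt a a" "\<not> lt a (f {})"
  shows "(\<exists>s\<in>V. \<forall>i k. i \<le> k \<and> k < length \<sigma> \<longrightarrow> \<not> lt (lab s i (\<sigma> ! i)) (lab s i (\<sigma> ! k))) \<longleftrightarrow>
    (\<forall>i k. 0 < i \<longrightarrow> i \<le> k \<longrightarrow> k < length \<sigma> \<longrightarrow>
       \<not> lt (f (earlier_adj E \<sigma> i (\<sigma> ! i))) (f (earlier_adj E \<sigma> i (\<sigma> ! k))))"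
proof -
  have set_\<sigma>: "set \<sigma> = V" using ord by (simp add: is_ordering_def)
  have not_first: "\<sigma> ! k \<noteq> \<sigma> ! 0" if "0 < k" "k < length \<sigma>" for k
    using ord that nth_eq_iff_index_eq by (fastforce simp: is_ordering_def)
  show ?thesis
  proof
    assume "\<exists>s\<in>V. \<forall>i k. i \<le> k \<and> k < length \<sigma> \<longrightarrow> \<not> lt (lab s i (\<sigma> ! i)) (lab s i (\<sigma> ! k))"
    then obtain s where "s \<in> V"
      and H: "\<And>i k. i \<le> k \<Longrightarrow> k < length \<sigma> \<Longrightarrow> \<not> lt (lab s i (\<sigma> ! i)) (lab s i (\<sigma> ! k))"
      by blast
    obtain k where k: "k < length \<sigma>" "\<sigma> ! k = s"
      using \<open>s \<in> V\<close> set_\<sigma> by (metis in_set_conv_nth)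
    have "\<sigma> ! 0 = s"
      using H[of 0 k] k lab[of "\<sigma> ! 0" s 0] lab_start assms(5) by fastforce
    then show "\<forall>i k. 0 < i \<longrightarrow> i \<le> k \<longrightarrow> k < length \<sigma> \<longrightarrow>
       \<not> lt (f (earlier_adj E \<sigma> i (\<sigma> ! i))) (f (earlier_adj E \<sigma> i (\<sigma> ! k)))"
      using H lab not_first by (metis le_less_trans less_le_trans)
  next
    assume H: "\<forall>i k. 0 < i \<longrightarrow> i \<le> k \<longrightarrow> k < length \<sigma> \<longrightarrow>
       \<not> lt (f (earlier_adj E \<sigma> i (\<sigma> ! i))) (f (earlier_adj E \<sigma> i (\<sigma> ! k)))"
    show "\<exists>s\<in>V. \<forall>i k. i \<le> k \<and> k < length \<sigma> \<longrightarrow> \<not> lt (lab s i (\<sigma> ! i)) (lab s i (\<sigma> ! k))"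
    proof (intro bexI allI impI)
      show "\<sigma> ! 0 \<in> V" using \<open>\<sigma> \<noteq> []\<close> set_\<sigma> by auto
      fix i k assume ik: "i \<le> k \<and> k < length \<sigma>"
      show "\<not> lt (lab (\<sigma> ! 0) i (\<sigma> ! i)) (lab (\<sigma> ! 0) i (\<sigma> ! k))"
      proof (cases "i = 0")
        case True
        then show ?thesis
          using lab_start lab[of "\<sigma> ! k" "\<sigma> ! 0" 0] not_first[of k] assms(6,7) ik
          by (cases "k = 0") auto
      next
        case False
        then show ?thesis using H ik not_first[of i] not_first[of k] lab by simp
      qed
    qed
  qed
qed

lemma search_ordering_iff_label_less:
  assumes "\<sigma> \<noteq> []"
  shows "search_ordering X V E \<sigma> \<longleftrightarrow> is_ordering V \<sigma> \<and>
    (\<forall>i k. 0 < i \<longrightarrow> i \<le> k \<longrightarrow> k < length \<sigma> \<longrightarrow>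
       \<not> label_less X (length \<sigma>) (earlier_adj E \<sigma> i (\<sigma> ! i)) (earlier_adj E \<sigma> i (\<sigma> ! k)))"
proof (cases X)
  case MNS
  have "mns_ordering V E \<sigma> \<longleftrightarrow> is_ordering V \<sigma> \<and>
    (\<forall>i k. 0 < i \<longrightarrow> i \<le> k \<longrightarrow> k < length \<sigma> \<longrightarrow>
       \<not> Suc ` earlier_adj E \<sigma> i (\<sigma> ! i) \<subset> Suc ` earlier_adj E \<sigma> i (\<sigma> ! k))"
    unfolding mns_ordering_def
    by (rule conj_cong[OF refl], rule start_search_iff[OF _ assms, where a = "{Suc (length \<sigma>)}"])
      (auto simp: mns_label_def set_earlier_nbrs)
  moreover have "Suc ` A \<subset> Suc ` B \<longleftrightarrow> A \<subset> B" for A B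
    by (simp add: psubset_eq inj_image_subset_iff inj_image_eq_iff del: image_subset_iff_subset_vimage)
  ultimately show ?thesis
    using MNS by simp
next
  case MCS
  have "mcs_label E \<sigma> i u = card (earlier_adj E \<sigma> i u)" for i u
    by (simp add: mcs_label_def earlier_nbrs_eq_sorted_list_of_set)
  then show ?thesis
    using MCS by (auto simp: mcs_ordering_def not_less) (metis earlier_adj_0 neq0_conv order_refl)
next
  case LBFS
  show ?thesis
    unfolding LBFS search_ordering.simps lbfs_ordering_def label_less.simps
    by (intro conj_cong[OF refl] start_search_iff[OF _ assms, where a = "[length \<sigma>]"])
      (auto simp: lbfs_label_def earlier_nbrs_eq_sorted_list_of_set lex_less_def)
next
  case LDFS
  show ?thesis
    unfolding LDFS search_ordering.simps ldfs_ordering_def label_less.simps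
    by (intro conj_cong[OF refl] start_search_iff[OF _ assms, where a = "[0]"])
      (auto simp: ldfs_label_def earlier_nbrs_eq_sorted_list_of_set lex_less_def)
qed

lemma mns_ordering_if_search_ordering:
  assumes "search_ordering X V E \<sigma>" "\<sigma> \<noteq> []"
  shows "mns_ordering V E \<sigma>"
proof -
  have ord: "is_ordering V \<sigma>"
    and H: "\<And>i k. 0 < i \<Longrightarrow> i \<le> k \<Longrightarrow> k < length \<sigma> \<Longrightarrow>
      \<not> label_less X (length \<sigma>) (earlier_adj E \<sigma> i (\<sigma> ! i)) (earlier_adj E \<sigma> i (\<sigma> ! k))"
    using assms(1) unfolding search_ordering_iff_label_less[OF assms(2)] by auto
  have "\<not> earlier_adj E \<sigma> i (\<sigma> ! i) \<subset> earlier_adj E \<sigma> i (\<sigma> ! k)"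
    if "0 < i" "i \<le> k" "k < length \<sigma>" for i k
  proof
    assume "earlier_adj E \<sigma> i (\<sigma> ! i) \<subset> earlier_adj E \<sigma> i (\<sigma> ! k)"
    moreover have "earlier_adj E \<sigma> i (\<sigma> ! k) \<subseteq> {..<length \<sigma>}"
      using earlier_adj_subset[of E \<sigma> i "\<sigma> ! k"] that by fastforce
    ultimately show False
      using H[OF that] label_less_if_psubset by blast
  qed
  then have "search_ordering MNS V E \<sigma>"
    unfolding search_ordering_iff_label_less[OF assms(2)] using ord by simp
  then show ?thesis by simp
qed

definition ltree_parent :: "'a set set \<Rightarrow> 'a list \<Rightarrow> nat \<Rightarrow> nat \<Rightarrow> bool" where
  "ltree_parent E \<sigma> j i \<longleftrightarrow> j < i \<and> i < length \<sigma> \<and> adj E (\<sigma> ! j) (\<sigma> ! i) \<and>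
     (\<forall>k. j < k \<and> k < i \<longrightarrow> \<not> adj E (\<sigma> ! k) (\<sigma> ! i))"

lemma ltree_parent_unique: "ltree_parent E \<sigma> j i \<Longrightarrow> ltree_parent E \<sigma> j' i \<Longrightarrow> j = j'"
  unfolding ltree_parent_def by (metis linorder_neqE_nat)

lemma ltree_parent_Max:
  assumes "i < length \<sigma>" "earlier_adj E \<sigma> i (\<sigma> ! i) \<noteq> {}"
  shows "ltree_parent E \<sigma> (Max (earlier_adj E \<sigma> i (\<sigma> ! i))) i"
proof -
  define A where "A = earlier_adj E \<sigma> i (\<sigma> ! i)"
  have "Max A \<in> A"
    using assms(2) unfolding A_def by (intro Max_in) simp_all
  then have "Max A < i" "adj E (\<sigma> ! Max A) (\<sigma> ! i)"
    by (simp_all add: A_def earlier_adj_def)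
  moreover have "\<not> adj E (\<sigma> ! k) (\<sigma> ! i)" if "Max A < k" "k < i" for k
  proof
    assume "adj E (\<sigma> ! k) (\<sigma> ! i)"
    then have "k \<in> A"
      using that(2) by (simp add: A_def earlier_adj_def)
    then have "k \<le> Max A"
      using Max_ge[of A k] by (simp add: A_def)
    then show False
      using that(1) by simp
  qed
  ultimately show ?thesis
    using assms(1) unfolding A_def ltree_parent_def by blast
qed

lemma mem_ltree_iff: "e \<in> ltree E \<sigma> \<longleftrightarrow> (\<exists>i j. e = {\<sigma> ! i, \<sigma> ! j} \<and> ltree_parent E \<sigma> j i)"
  unfolding ltree_def ltree_parent_def by blast

lemma adj_ltree_iff:
  "adj (ltree E \<sigma>) x y \<longleftrightarrow>
     (\<exists>a b. x = \<sigma> ! a \<and> y = \<sigma> ! b \<and> (ltree_parent E \<sigma> b a \<or> ltree_parent E \<sigma> a b))"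
proof
  assume "adj (ltree E \<sigma>) x y"
  then obtain i j where "{x, y} = {\<sigma> ! i, \<sigma> ! j}" "ltree_parent E \<sigma> j i"
    unfolding adj_def mem_ltree_iff by blast
  then show "\<exists>a b. x = \<sigma> ! a \<and> y = \<sigma> ! b \<and> (ltree_parent E \<sigma> b a \<or> ltree_parent E \<sigma> a b)"
    by (metis doubleton_eq_iff)
next
  assume "\<exists>a b. x = \<sigma> ! a \<and> y = \<sigma> ! b \<and> (ltree_parent E \<sigma> b a \<or> ltree_parent E \<sigma> a b)"
  then show "adj (ltree E \<sigma>) x y"
    unfolding adj_def mem_ltree_iff by (metis insert_commute)
qed

lemma nbhd_ltree_childless:
  assumes "distinct \<sigma>" "ltree_parent E \<sigma> p i" "\<And>k. \<not> ltree_parent E \<sigma> i k"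
  shows "nbhd (ltree E \<sigma>) (\<sigma> ! i) = {\<sigma> ! p}"
proof (intro equalityI subsetI)
  fix y assume "y \<in> nbhd (ltree E \<sigma>) (\<sigma> ! i)"
  then obtain a b where ab: "\<sigma> ! i = \<sigma> ! a" "y = \<sigma> ! b"
    and parent: "ltree_parent E \<sigma> b a \<or> ltree_parent E \<sigma> a b"
    unfolding nbhd_def adj_ltree_iff by blast
  have "a < length \<sigma>" "i < length \<sigma>"
    using parent assms(2) unfolding ltree_parent_def by auto
  then have "a = i"
    using ab(1) assms(1) nth_eq_iff_index_eq by metis
  then have "b = p"
    using parent assms(2,3) ltree_parent_unique by blast
  then show "y \<in> {\<sigma> ! p}" using ab(2) by simp
next
  fix y assume "y \<in> {\<sigma> ! p}"
  then show "y \<in> nbhd (ltree E \<sigma>) (\<sigma> ! i)"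
    using assms(2) unfolding nbhd_def adj_ltree_iff by blast
qed

section \<open>MNS orderings of connected split graphs\<close>

definition search_caterpillar ::
  "'a set \<Rightarrow> 'a set set \<Rightarrow> 'a set \<Rightarrow> 'a set \<Rightarrow> 'a set set \<Rightarrow> 'a set \<Rightarrow> 'a list \<Rightarrow> bool" where
  "search_caterpillar V E C I T L P \<longleftrightarrow> L \<inter> set P = {} \<and> V = L \<union> set P \<and> is_path T P \<and>
     (\<forall>w\<in>L. deg T w = 1 \<and> (\<exists>v\<in>set P. adj T w v)) \<and> C \<subseteq> set P \<and>
     (\<forall>w\<in>L. \<forall>i<length P. adj T w (P ! i) \<longrightarrow>
        (\<forall>j. i < j \<and> j < length P \<longrightarrow> \<not> adj E w (P ! j))) \<and>
     (\<forall>i<length P. P ! i \<in> I \<longrightarrow>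
        (let l = card (set (take i P) \<inter> C) in
           set (take i P) \<inter> C \<subseteq> nbhd E (P ! i) \<and>
           {P ! j | j. i < j \<and> j \<le> i + deg E (P ! i) - l} \<subseteq> nbhd E (P ! i)))"

locale split_graph_mns_ordering =
  fixes V :: "'a set" and E :: "'a set set" and C I :: "'a set" and \<sigma> :: "'a list"
  assumes split: "split_graph V E C I" and conn: "connected V E" and mns: "mns_ordering V E \<sigma>"
begin

abbreviation "n \<equiv> length \<sigma>"

lemma distinct_\<sigma>: "distinct \<sigma>" and set_\<sigma>: "set \<sigma> = V"
  using mns by (auto simp: mns_ordering_def is_ordering_def)

lemma nth_in_V: "i < n \<Longrightarrow> \<sigma> ! i \<in> V"
  by (metis nth_mem set_\<sigma>)

lemma nth_eq_iff: "i < n \<Longrightarrow> j < n \<Longrightarrow> \<sigma> ! i = \<sigma> ! j \<longleftrightarrow> i = j"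
  by (simp add: distinct_\<sigma> nth_eq_iff_index_eq)

lemma ex_index: "v \<in> V \<Longrightarrow> \<exists>i<n. v = \<sigma> ! i"
  using set_\<sigma> by (metis in_set_conv_nth)

lemma \<sigma>_nonempty: "\<sigma> \<noteq> []"
  using conn set_\<sigma> by (auto simp: connected_def)

lemma nth_in_C_iff: "i < n \<Longrightarrow> \<sigma> ! i \<in> C \<longleftrightarrow> \<sigma> ! i \<notin> I"
  by (simp add: split_graph_C_iff_not_I[OF split] nth_in_V)

lemma earlier_adj_eq_if_subset:
  assumes "i \<le> k" "k < n" "earlier_adj E \<sigma> i (\<sigma> ! i) \<subseteq> earlier_adj E \<sigma> i (\<sigma> ! k)"
  shows "earlier_adj E \<sigma> i (\<sigma> ! i) = earlier_adj E \<sigma> i (\<sigma> ! k)"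
proof (cases "i = 0")
  case False
  then show ?thesis
    using mns assms search_ordering_iff_label_less[OF \<sigma>_nonempty, of MNS V E] by auto
qed simp

text \<open>If \<open>\<sigma>\<^sub>i\<close> had no numbered neighbour, then by maximality no unnumbered vertex would
  have one, so the numbered vertices would form a union of components.\<close>

lemma ltree_parent_exists:
  assumes "0 < i" "i < n"
  shows "\<exists>p. ltree_parent E \<sigma> p i"
proof -
  have "earlier_adj E \<sigma> i (\<sigma> ! i) \<noteq> {}"
  proof
    assume "earlier_adj E \<sigma> i (\<sigma> ! i) = {}"
    then have later_empty: "earlier_adj E \<sigma> i (\<sigma> ! k) = {}" if "i \<le> k" "k < n" for k
      using earlier_adj_eq_if_subset[OF that] by simp
    have closed: "\<exists>j<i. v = \<sigma> ! j" if u: "\<exists>j<i. u = \<sigma> ! j" and uv: "adj E u v" for u v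
    proof -
      obtain j where j: "j < i" "u = \<sigma> ! j" using u by blast
      obtain k where k: "k < n" "v = \<sigma> ! k"
        using ex_index graph_adjD(2)[OF split_graph_graph[OF split] uv] by blast
      have "k < i"
      proof (rule ccontr)
        assume "\<not> k < i"
        then have "j \<in> earlier_adj E \<sigma> i (\<sigma> ! k)"
          using j k uv by (simp add: earlier_adj_def)
        then show False
          using later_empty[of k] \<open>\<not> k < i\<close> k(1) by simp
      qed
      then show ?thesis
        using k by blast
    qed
    have "\<sigma> ! 0 \<in> V" "\<sigma> ! i \<in> V"
      using assms nth_in_V[of 0] nth_in_V[of i] by linarith+
    then have "(adj E)\<^sup>*\<^sup>* (\<sigma> ! 0) (\<sigma> ! i)"
      using conn unfolding connected_def by blast
    then have "\<exists>j<i. \<sigma> ! i = \<sigma> ! j"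
      by (induction rule: rtranclp_induct) (use assms closed in blast)+
    then show False
      using nth_eq_iff assms by fastforce
  qed
  then show ?thesis
    using ltree_parent_Max assms(2) by blast
qed

text \<open>When an independent vertex \<open>\<sigma>\<^sub>b\<close> is chosen, a later clique vertex \<open>\<sigma>\<^sub>k\<close> sees every
  earlier clique vertex while \<open>\<sigma>\<^sub>b\<close> sees only such vertices; by maximality both see exactly
  the earlier clique vertices.\<close>

lemma earlier_adj_indep:
  assumes "b \<le> k" "k < n" "\<sigma> ! b \<in> I" "\<sigma> ! k \<in> C"
  shows "earlier_adj E \<sigma> b (\<sigma> ! b) = {j. j < b \<and> \<sigma> ! j \<in> C}"
    and "earlier_adj E \<sigma> b (\<sigma> ! k) = {j. j < b \<and> \<sigma> ! j \<in> C}"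
proof -
  have sub_C: "earlier_adj E \<sigma> b (\<sigma> ! b) \<subseteq> {j. j < b \<and> \<sigma> ! j \<in> C}"
  proof
    fix j assume "j \<in> earlier_adj E \<sigma> b (\<sigma> ! b)"
    then have "j < b" "adj E (\<sigma> ! b) (\<sigma> ! j)"
      by (auto simp: earlier_adj_def adj_commute)
    then show "j \<in> {j. j < b \<and> \<sigma> ! j \<in> C}"
      using split_graph_adj_indep[OF split _ assms(3)] by simp
  qed
  have C_sub: "{j. j < b \<and> \<sigma> ! j \<in> C} \<subseteq> earlier_adj E \<sigma> b (\<sigma> ! k)"
  proof
    fix j assume j: "j \<in> {j. j < b \<and> \<sigma> ! j \<in> C}"
    then have "\<sigma> ! j \<noteq> \<sigma> ! k" using nth_eq_iff assms(1,2) by auto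
    then show "j \<in> earlier_adj E \<sigma> b (\<sigma> ! k)"
      using j split_graph_clique_adj[OF split] assms(4) by (auto simp: earlier_adj_def)
  qed
  have "earlier_adj E \<sigma> b (\<sigma> ! b) = earlier_adj E \<sigma> b (\<sigma> ! k)"
    using earlier_adj_eq_if_subset[OF assms(1,2)] sub_C C_sub by blast
  then show "earlier_adj E \<sigma> b (\<sigma> ! b) = {j. j < b \<and> \<sigma> ! j \<in> C}"
    and "earlier_adj E \<sigma> b (\<sigma> ! k) = {j. j < b \<and> \<sigma> ! j \<in> C}"
    using sub_C C_sub by auto
qed

lemma indep_adj_earlier_clique:
  assumes "j < b" "b \<le> k" "k < n" "\<sigma> ! b \<in> I" "\<sigma> ! k \<in> C" "\<sigma> ! j \<in> C"
  shows "adj E (\<sigma> ! j) (\<sigma> ! b)"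
  using earlier_adj_indep(1)[OF assms(2-5)] assms(1,6) by (auto simp: earlier_adj_def)

lemma indep_not_adj_past_indep:
  assumes "a < b" "b \<le> k" "k < n" "\<sigma> ! a \<in> I" "\<sigma> ! b \<in> I" "\<sigma> ! k \<in> C"
  shows "\<not> adj E (\<sigma> ! a) (\<sigma> ! k)"
proof
  assume "adj E (\<sigma> ! a) (\<sigma> ! k)"
  then have "a \<in> earlier_adj E \<sigma> b (\<sigma> ! k)"
    using assms(1) by (simp add: earlier_adj_def)
  then have "\<sigma> ! a \<in> C"
    using earlier_adj_indep(2)[OF assms(2,3,5,6)] by simp
  then show False
    using nth_in_C_iff assms by auto
qed

lemma indep_adj_between:
  assumes "a < b" "b \<le> k" "k < n" "\<sigma> ! a \<in> I" "adj E (\<sigma> ! a) (\<sigma> ! k)"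
  shows "adj E (\<sigma> ! a) (\<sigma> ! b)"
proof -
  have "b < n" using assms(2,3) by linarith
  have k_C: "\<sigma> ! k \<in> C"
    using split_graph_adj_indep[OF split assms(5,4)] .
  have b_C: "\<sigma> ! b \<in> C"
  proof (rule ccontr)
    assume "\<sigma> ! b \<notin> C"
    then have "\<sigma> ! b \<in> I" using nth_in_C_iff \<open>b < n\<close> by simp
    then show False
      using indep_not_adj_past_indep[OF assms(1-4) _ k_C] assms(5) by simp
  qed
  have "earlier_adj E \<sigma> b (\<sigma> ! b) \<subseteq> earlier_adj E \<sigma> b (\<sigma> ! k)"
  proof
    fix j assume "j \<in> earlier_adj E \<sigma> b (\<sigma> ! b)"
    then have j: "j < b" "adj E (\<sigma> ! j) (\<sigma> ! b)" by (auto simp: earlier_adj_def)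
    have "adj E (\<sigma> ! j) (\<sigma> ! k)"
    proof (cases "\<sigma> ! j \<in> C")
      case True
      have "\<sigma> ! j \<noteq> \<sigma> ! k" using nth_eq_iff j(1) assms(2,3) by simp
      then show ?thesis using split_graph_clique_adj[OF split True k_C] by simp
    next
      case False
      then have j_I: "\<sigma> ! j \<in> I" using nth_in_C_iff j(1) \<open>b < n\<close> by simp
      show ?thesis
      proof (cases j a rule: linorder_cases)
        case less
        then show ?thesis
          using indep_not_adj_past_indep[OF less _ \<open>b < n\<close> j_I assms(4) b_C] assms(1) j(2) by simp
      next
        case equal
        then show ?thesis using assms(5) by simp
      next
        case greater
        then show ?thesis
          using indep_not_adj_past_indep[OF greater _ assms(3,4) j_I k_C] j(1) assms(2,5) by simp
      qed
    qed
    then show "j \<in> earlier_adj E \<sigma> b (\<sigma> ! k)" using j by (auto simp: earlier_adj_def)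
  qed
  then have "a \<in> earlier_adj E \<sigma> b (\<sigma> ! b)"
    using earlier_adj_eq_if_subset[OF assms(2,3)] assms(1,5) by (auto simp: earlier_adj_def)
  then show ?thesis by (simp add: earlier_adj_def adj_commute)
qed

text \<open>The path \<open>P\<close> of the characterisation is formed by the start vertex, the clique and all
  vertices with a child in the L-tree; the remaining vertices are the leaves \<open>L\<close>.\<close>

definition spine_indices :: "nat set" where
  "spine_indices = {i. i < n \<and> (i = 0 \<or> \<sigma> ! i \<in> C \<or> (\<exists>k. ltree_parent E \<sigma> i k))}"

definition spine_idx :: "nat list" where
  "spine_idx = sorted_list_of_set spine_indices"

definition spine :: "'a list" where
  "spine = map ((!) \<sigma>) spine_idx"

lemma spine_index_less: "i \<in> spine_indices \<Longrightarrow> i < n"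
  by (simp add: spine_indices_def)

lemma set_spine_idx: "set spine_idx = spine_indices"
  by (simp add: spine_idx_def spine_indices_def)

lemma sorted_spine_idx: "sorted_wrt (<) spine_idx"
  by (simp add: spine_idx_def strict_sorted_list_of_set)

lemma spine_idx_in: "q < length spine_idx \<Longrightarrow> spine_idx ! q \<in> spine_indices"
  using set_spine_idx nth_mem by blast

lemma ex_spine_pos: "i \<in> spine_indices \<Longrightarrow> \<exists>q<length spine_idx. spine_idx ! q = i"
  by (metis set_spine_idx in_set_conv_nth)

lemma length_spine: "length spine = length spine_idx"
  by (simp add: spine_def)

lemma nth_spine: "q < length spine_idx \<Longrightarrow> spine ! q = \<sigma> ! (spine_idx ! q)"
  by (simp add: spine_def)

lemma set_spine: "set spine = (!) \<sigma> ` spine_indices"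
  by (simp add: spine_def set_spine_idx)

lemma distinct_spine: "distinct spine"
proof -
  have "inj_on ((!) \<sigma>) (set spine_idx)"
    using nth_eq_iff spine_index_less by (auto simp: set_spine_idx inj_on_def)
  then show ?thesis
    using sorted_spine_idx by (simp add: spine_def distinct_map strict_sorted_iff)
qed

lemma spine_nonempty: "spine \<noteq> []"
proof -
  have "0 \<in> spine_indices"
    using \<sigma>_nonempty by (simp add: spine_indices_def)
  then show ?thesis
    using set_spine by force
qed

lemma clique_in_spine: "i < n \<Longrightarrow> \<sigma> ! i \<in> C \<Longrightarrow> i \<in> spine_indices"
  by (simp add: spine_indices_def)

lemma parent_in_spine: "ltree_parent E \<sigma> p i \<Longrightarrow> p \<in> spine_indices"
  by (auto simp: spine_indices_def ltree_parent_def)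

lemma child_of_indep_in_C: "ltree_parent E \<sigma> i k \<Longrightarrow> \<sigma> ! i \<in> I \<Longrightarrow> \<sigma> ! k \<in> C"
  using split_graph_adj_indep[OF split] by (auto simp: ltree_parent_def)

lemma spine_indep_has_child:
  assumes "i \<in> spine_indices" "0 < i" "\<sigma> ! i \<in> I"
  obtains k where "ltree_parent E \<sigma> i k" "\<sigma> ! k \<in> C"
  using assms child_of_indep_in_C nth_in_C_iff by (auto simp: spine_indices_def)

lemma not_in_spine:
  assumes "i < n" "i \<notin> spine_indices"
  shows "0 < i" "\<sigma> ! i \<in> I" "\<And>k. \<not> ltree_parent E \<sigma> i k"
  using assms nth_in_C_iff by (auto simp: spine_indices_def)

lemma clique_adj_later_spine:
  assumes "a < b" "b \<in> spine_indices" "\<sigma> ! a \<in> C"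
  shows "adj E (\<sigma> ! a) (\<sigma> ! b)"
proof (cases "\<sigma> ! b \<in> C")
  case True
  have "\<sigma> ! a \<noteq> \<sigma> ! b"
    using assms(1) spine_index_less[OF assms(2)] nth_eq_iff[of a b] by simp
  then show ?thesis
    using split_graph_clique_adj[OF split assms(3) True] by simp
next
  case False
  then have "\<sigma> ! b \<in> I"
    using assms(2) spine_index_less nth_in_C_iff by simp
  then obtain k where "ltree_parent E \<sigma> b k" "\<sigma> ! k \<in> C"
    using spine_indep_has_child assms(1,2) by blast
  then show ?thesis
    using indep_adj_earlier_clique[of a b k] assms(1,3) \<open>\<sigma> ! b \<in> I\<close>
    by (simp add: ltree_parent_def)
qed

lemma adj_next_spine:
  assumes a: "a \<in> spine_indices" and b: "b \<in> spine_indices" and "0 < a" "a < b"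
    and between: "\<And>x. x \<in> spine_indices \<Longrightarrow> a < x \<Longrightarrow> x < b \<Longrightarrow> False"
  shows "adj E (\<sigma> ! a) (\<sigma> ! b)"
proof (cases "\<sigma> ! a \<in> C")
  case True
  then show ?thesis using clique_adj_later_spine[OF \<open>a < b\<close> b] by simp
next
  case False
  then have a_I: "\<sigma> ! a \<in> I"
    using a spine_index_less nth_in_C_iff by simp
  then obtain k where k: "ltree_parent E \<sigma> a k" "\<sigma> ! k \<in> C"
    using spine_indep_has_child a \<open>0 < a\<close> by blast
  then have "a < k" "k < n" "adj E (\<sigma> ! a) (\<sigma> ! k)"
    by (auto simp: ltree_parent_def)
  have "\<not> k < b"
    using between[OF clique_in_spine[OF \<open>k < n\<close> k(2)] \<open>a < k\<close>] by blast
  moreover have "\<not> b < k"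
  proof
    assume "b < k"
    show False
    proof (cases "\<sigma> ! b \<in> C")
      case True
      then have "adj E (\<sigma> ! b) (\<sigma> ! k)"
        using clique_adj_later_spine[OF \<open>b < k\<close> clique_in_spine[OF \<open>k < n\<close> k(2)]] by simp
      then show False
        using k(1) \<open>a < b\<close> \<open>b < k\<close> by (simp add: ltree_parent_def)
    next
      case False
      then have "\<sigma> ! b \<in> I"
        using b spine_index_less nth_in_C_iff by simp
      then show False
        using indep_not_adj_past_indep[OF \<open>a < b\<close> _ \<open>k < n\<close> a_I _ k(2)] \<open>b < k\<close>
          \<open>adj E (\<sigma> ! a) (\<sigma> ! k)\<close> by simp
    qed
  qed
  ultimately have "k = b" by simp
  then show ?thesis
    using \<open>adj E (\<sigma> ! a) (\<sigma> ! k)\<close> by simp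
qed

lemma ltree_parent_next_spine:
  assumes a: "a \<in> spine_indices" and b: "b \<in> spine_indices" and "a < b"
    and between: "\<And>x. x \<in> spine_indices \<Longrightarrow> a < x \<Longrightarrow> x < b \<Longrightarrow> False"
  shows "ltree_parent E \<sigma> a b"
proof -
  have "0 < b" "b < n"
    using \<open>a < b\<close> spine_index_less[OF b] by simp_all
  then obtain p where p: "ltree_parent E \<sigma> p b"
    using ltree_parent_exists by blast
  have "p \<le> a"
    using between[OF parent_in_spine[OF p]] p by (force simp: ltree_parent_def)
  moreover have "\<not> p < a"
  proof
    assume "p < a"
    then have "adj E (\<sigma> ! a) (\<sigma> ! b)"
      using adj_next_spine[OF a b _ \<open>a < b\<close> between] by simp
    then show False
      using p \<open>p < a\<close> \<open>a < b\<close> by (simp add: ltree_parent_def)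
  qed
  ultimately show ?thesis
    using p by (metis le_neq_implies_less)
qed

lemma ltree_parent_spine_Suc:
  assumes "Suc q < length spine_idx"
  shows "ltree_parent E \<sigma> (spine_idx ! q) (spine_idx ! Suc q)"
proof (rule ltree_parent_next_spine)
  show "spine_idx ! q \<in> spine_indices" "spine_idx ! Suc q \<in> spine_indices"
    using spine_idx_in assms by simp_all
  show "spine_idx ! q < spine_idx ! Suc q"
    using sorted_wrt_less_nth_less_iff[OF sorted_spine_idx] assms by simp
  fix x assume "x \<in> spine_indices" "spine_idx ! q < x" "x < spine_idx ! Suc q"
  moreover obtain r where "r < length spine_idx" "spine_idx ! r = x"
    using ex_spine_pos \<open>x \<in> spine_indices\<close> by blast
  ultimately show False
    using sorted_wrt_less_nth_less_iff[OF sorted_spine_idx] assms by (metis Suc_lessD not_less_eq)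
qed

lemma is_path_spine: "is_path (ltree E \<sigma>) spine"
  unfolding is_path_def
proof (intro conjI allI impI)
  show "spine \<noteq> []" "distinct spine"
    by (simp_all add: spine_nonempty distinct_spine)
  fix q assume "Suc q < length spine"
  then show "adj (ltree E \<sigma>) (spine ! q) (spine ! Suc q)"
    using ltree_parent_spine_Suc[of q] unfolding adj_ltree_iff
    by (auto simp: length_spine nth_spine)
qed

lemma leaf_index:
  assumes "v \<in> V" "v \<notin> set spine"
  obtains i p where "i < n" "v = \<sigma> ! i" "i \<notin> spine_indices" "ltree_parent E \<sigma> p i"
    "nbhd (ltree E \<sigma>) v = {\<sigma> ! p}"
proof -
  obtain i where i: "i < n" "v = \<sigma> ! i"
    using ex_index assms(1) by blast
  then have "i \<notin> spine_indices"
    using assms(2) set_spine by auto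
  moreover obtain p where "ltree_parent E \<sigma> p i"
    using ltree_parent_exists not_in_spine(1)[OF i(1)] i(1) calculation by blast
  ultimately show ?thesis
    using that i nbhd_ltree_childless[OF distinct_\<sigma>] not_in_spine(3)[OF i(1)] by blast
qed

lemma leaf_not_adj_later_spine:
  assumes "i < n" "i \<notin> spine_indices" "ltree_parent E \<sigma> p i" "q \<in> spine_indices" "p < q"
  shows "\<not> adj E (\<sigma> ! i) (\<sigma> ! q)"
proof
  assume adj: "adj E (\<sigma> ! i) (\<sigma> ! q)"
  consider "q < i" | "q = i" | "i < q" by linarith
  then show False
  proof cases
    case 1
    moreover have "adj E (\<sigma> ! q) (\<sigma> ! i)"
      using adj by (simp add: adj_commute)
    ultimately show False
      using assms(3,5) unfolding ltree_parent_def by blast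
  next
    case 2
    then show False using assms(2,4) by simp
  next
    case 3
    have "adj E (\<sigma> ! i) (\<sigma> ! Suc i)"
      using indep_adj_between[of i "Suc i" q] 3 assms(4) spine_index_less
        not_in_spine(2)[OF assms(1,2)] adj by simp
    moreover have "Suc i < n"
      using 3 spine_index_less[OF assms(4)] by simp
    ultimately have "ltree_parent E \<sigma> i (Suc i)"
      by (auto simp: ltree_parent_def)
    then show False
      using not_in_spine(3)[OF assms(1,2)] by blast
  qed
qed

lemma set_take_spine_inter_C:
  assumes "m < length spine_idx"
  shows "set (take m spine) \<inter> C = (!) \<sigma> ` {j. j < spine_idx ! m \<and> \<sigma> ! j \<in> C}"
proof -
  have "set (take m spine) = (!) \<sigma> ` {x \<in> spine_indices. x < spine_idx ! m}"
    using set_take_sorted_wrt_less[OF sorted_spine_idx assms]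
    by (simp add: spine_def take_map set_spine_idx)
  moreover have "spine_idx ! m < n"
    using spine_idx_in[OF assms] spine_index_less by blast
  ultimately show ?thesis
    using clique_in_spine by auto
qed

lemma later_nbrs_indep_interval:
  assumes "a < n" "\<sigma> ! a \<in> I"
  obtains r where "{k. a < k \<and> k < n \<and> adj E (\<sigma> ! a) (\<sigma> ! k)} = {a<..a + r}"
proof (cases "{k. a < k \<and> k < n \<and> adj E (\<sigma> ! a) (\<sigma> ! k)} = {}")
  case True
  then show ?thesis using that[of 0] by simp
next
  case False
  define K where "K = {k. a < k \<and> k < n \<and> adj E (\<sigma> ! a) (\<sigma> ! k)}"
  have "finite K" "K \<noteq> {}"
    using False by (simp_all add: K_def)
  then have "Max K \<in> K"
    by (rule Max_in)
  have "K = {a<..Max K}"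
  proof
    show "K \<subseteq> {a<..Max K}"
      using \<open>finite K\<close> by (auto simp: K_def)
    show "{a<..Max K} \<subseteq> K"
      using indep_adj_between \<open>Max K \<in> K\<close> assms(2) by (fastforce simp: K_def)
  qed
  then show ?thesis
    using that[of "Max K - a"] \<open>Max K \<in> K\<close> by (simp add: K_def)
qed

lemma nbhd_spine_indep:
  assumes "a \<in> spine_indices" "\<sigma> ! a \<in> I"
  shows "nbhd E (\<sigma> ! a) =
    (!) \<sigma> ` ({j. j < a \<and> \<sigma> ! j \<in> C} \<union> {k. a < k \<and> k < n \<and> adj E (\<sigma> ! a) (\<sigma> ! k)})"
proof (intro equalityI subsetI)
  fix u assume "u \<in> nbhd E (\<sigma> ! a)"
  then have u: "adj E (\<sigma> ! a) u" by (simp add: nbhd_def)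
  then obtain t where t: "t < n" "u = \<sigma> ! t"
    using ex_index graph_adjD(2)[OF split_graph_graph[OF split]] by blast
  have "t \<noteq> a"
    using graph_adjD(3)[OF split_graph_graph[OF split] u] t by auto
  moreover have "\<sigma> ! t \<in> C"
    using split_graph_adj_indep[OF split u assms(2)] t by simp
  ultimately show "u \<in> (!) \<sigma> ` ({j. j < a \<and> \<sigma> ! j \<in> C} \<union> {k. a < k \<and> k < n \<and> adj E (\<sigma> ! a) (\<sigma> ! k)})"
    using t u by (auto simp: not_less_iff_gr_or_eq)
next
  fix u assume "u \<in> (!) \<sigma> ` ({j. j < a \<and> \<sigma> ! j \<in> C} \<union> {k. a < k \<and> k < n \<and> adj E (\<sigma> ! a) (\<sigma> ! k)})"
  then consider j where "u = \<sigma> ! j" "j < a" "\<sigma> ! j \<in> C" | "adj E (\<sigma> ! a) u"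
    by blast
  then show "u \<in> nbhd E (\<sigma> ! a)"
  proof cases
    case 1
    then have "0 < a" by simp
    then obtain k where "ltree_parent E \<sigma> a k" "\<sigma> ! k \<in> C"
      using spine_indep_has_child assms by blast
    then have "adj E (\<sigma> ! j) (\<sigma> ! a)"
      using indep_adj_earlier_clique[of j a k] 1 assms(2) by (simp add: ltree_parent_def)
    then show ?thesis using 1 by (simp add: nbhd_def adj_commute)
  qed (simp add: nbhd_def)
qed

lemma card_take_spine_inter_C:
  assumes "m < length spine_idx"
  shows "card (set (take m spine) \<inter> C) = card {j. j < spine_idx ! m \<and> \<sigma> ! j \<in> C}"
proof -
  have "spine_idx ! m < n"
    using spine_idx_in[OF assms] spine_index_less by blast
  then have "inj_on ((!) \<sigma>) {j. j < spine_idx ! m \<and> \<sigma> ! j \<in> C}"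
    by (intro inj_on_nth[OF distinct_\<sigma>]) simp
  then show ?thesis
    unfolding set_take_spine_inter_C[OF assms] by (rule card_image)
qed

lemma deg_spine_indep:
  assumes "a \<in> spine_indices" "\<sigma> ! a \<in> I"
    and later: "{k. a < k \<and> k < n \<and> adj E (\<sigma> ! a) (\<sigma> ! k)} = {a<..a + r}"
  shows "deg E (\<sigma> ! a) = card {j. j < a \<and> \<sigma> ! j \<in> C} + r"
proof -
  let ?Cb = "{j. j < a \<and> \<sigma> ! j \<in> C}"
  have "{a<..a + r} \<subseteq> {..<n}"
    unfolding later[symmetric] by auto
  then have "inj_on ((!) \<sigma>) (?Cb \<union> {a<..a + r})"
    using spine_index_less[OF assms(1)] by (intro inj_on_nth[OF distinct_\<sigma>]) auto
  then have "deg E (\<sigma> ! a) = card (?Cb \<union> {a<..a + r})"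
    using nbhd_spine_indep[OF assms(1,2)] later by (simp add: deg_def card_image)
  also have "\<dots> = card ?Cb + r"
  proof -
    have "finite ?Cb" "?Cb \<inter> {a<..a + r} = {}"
      by auto
    then show ?thesis
      using card_Un_disjoint[of ?Cb "{a<..a + r}"] by simp
  qed
  finally show ?thesis .
qed

text \<open>The later neighbours of an independent spine vertex are clique vertices, hence they
  follow it directly on the spine.\<close>

lemma spine_idx_block:
  assumes "m < length spine_idx" "\<sigma> ! (spine_idx ! m) \<in> I"
    and later: "{k. spine_idx ! m < k \<and> k < n \<and> adj E (\<sigma> ! (spine_idx ! m)) (\<sigma> ! k)} =
      {spine_idx ! m<..spine_idx ! m + r}"
    and "t \<le> r"
  shows "m + t < length spine_idx \<and> spine_idx ! (m + t) = spine_idx ! m + t"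
proof (rule sorted_wrt_less_nth_interval[OF sorted_spine_idx assms(1) _ assms(4)])
  show "{spine_idx ! m<..spine_idx ! m + r} \<subseteq> set spine_idx"
  proof
    fix k assume "k \<in> {spine_idx ! m<..spine_idx ! m + r}"
    then have "k < n" "adj E (\<sigma> ! (spine_idx ! m)) (\<sigma> ! k)"
      unfolding later[symmetric] by auto
    then show "k \<in> set spine_idx"
      using clique_in_spine split_graph_adj_indep[OF split _ assms(2)] set_spine_idx by simp
  qed
qed

lemma spine_indep_condition:
  assumes "m < length spine" "spine ! m \<in> I"
  shows "set (take m spine) \<inter> C \<subseteq> nbhd E (spine ! m)"
    and "{spine ! j | j. m < j \<and> j \<le> m + deg E (spine ! m) - card (set (take m spine) \<inter> C)}
      \<subseteq> nbhd E (spine ! m)"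
proof -
  define a where "a = spine_idx ! m"
  have m: "m < length spine_idx" using assms(1) by (simp add: length_spine)
  have a: "a \<in> spine_indices" "a < n" "spine ! m = \<sigma> ! a" "\<sigma> ! a \<in> I"
    using spine_idx_in[OF m] spine_index_less nth_spine[OF m] assms(2) by (simp_all add: a_def)
  obtain r where later: "{k. a < k \<and> k < n \<and> adj E (\<sigma> ! a) (\<sigma> ! k)} = {a<..a + r}"
    using later_nbrs_indep_interval[OF a(2,4)] by blast
  have nbhd: "nbhd E (\<sigma> ! a) = (!) \<sigma> ` ({j. j < a \<and> \<sigma> ! j \<in> C} \<union> {a<..a + r})"
    using nbhd_spine_indep[OF a(1,4)] later by simp
  show "set (take m spine) \<inter> C \<subseteq> nbhd E (spine ! m)"
    using set_take_spine_inter_C[OF m] nbhd a(3) by (auto simp: a_def)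
  have bound: "m + deg E (spine ! m) - card (set (take m spine) \<inter> C) = m + r"
    using deg_spine_indep[OF a(1,4) later] card_take_spine_inter_C[OF m] a(3) by (simp add: a_def)
  show "{spine ! j | j. m < j \<and> j \<le> m + deg E (spine ! m) - card (set (take m spine) \<inter> C)}
      \<subseteq> nbhd E (spine ! m)"
  proof
    fix u assume "u \<in> {spine ! j | j. m < j \<and> j \<le> m + deg E (spine ! m) - card (set (take m spine) \<inter> C)}"
    then obtain j where j: "u = spine ! j" "m < j" "j \<le> m + r"
      unfolding bound by blast
    define t where "t = j - m"
    have t: "u = spine ! (m + t)" "0 < t" "t \<le> r"
      using j by (simp_all add: t_def)
    then have "u = \<sigma> ! (a + t)"
      using spine_idx_block[OF m a(4)[unfolded a_def] later[unfolded a_def] t(3)] nth_spine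
      by (simp add: a_def)
    then show "u \<in> nbhd E (spine ! m)"
      unfolding a(3) nbhd using t(2,3) by auto
  qed
qed

lemma leaf_not_adj_later_spine_pos:
  assumes w: "w \<in> V - set spine" and mj: "m < length spine" "adj (ltree E \<sigma>) w (spine ! m)"
    "m < j" "j < length spine"
  shows "\<not> adj E w (spine ! j)"
proof -
  obtain i p where i: "i < n" "w = \<sigma> ! i" "i \<notin> spine_indices" "ltree_parent E \<sigma> p i"
    and nb: "nbhd (ltree E \<sigma>) w = {\<sigma> ! p}"
    using leaf_index w by blast
  have m: "m < length spine_idx" and j: "j < length spine_idx"
    using mj(1,4) by (simp_all add: length_spine)
  have "\<sigma> ! (spine_idx ! m) = \<sigma> ! p"
    using mj(2) nb nth_spine[OF m] by (simp add: nbhd_def set_eq_iff)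
  moreover have "spine_idx ! m < n" "p < n"
    using spine_index_less[OF spine_idx_in[OF m]] i(4) by (auto simp: ltree_parent_def)
  ultimately have "spine_idx ! m = p"
    using nth_eq_iff by blast
  moreover have "spine_idx ! m < spine_idx ! j"
    using sorted_wrt_less_nth_less_iff[OF sorted_spine_idx m j] mj(3) by simp
  ultimately show ?thesis
    using leaf_not_adj_later_spine[OF i(1,3,4) spine_idx_in[OF j]] i(2) nth_spine[OF j] by simp
qed

lemma search_caterpillar_ltree: "search_caterpillar V E C I (ltree E \<sigma>) (V - set spine) spine"
proof -
  have spine_V: "set spine \<subseteq> V"
    using set_spine spine_index_less nth_in_V by auto
  have C_spine: "C \<subseteq> set spine"
  proof
    fix c assume "c \<in> C"
    then have "c \<in> V"
      using split by (auto simp: split_graph_def)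
    then obtain i where "i < n" "c = \<sigma> ! i"
      using ex_index by blast
    then show "c \<in> set spine"
      using \<open>c \<in> C\<close> clique_in_spine set_spine by auto
  qed
  have leaves: "deg (ltree E \<sigma>) w = 1 \<and> (\<exists>v\<in>set spine. adj (ltree E \<sigma>) w v)"
    if w: "w \<in> V - set spine" for w
  proof -
    obtain i p where "ltree_parent E \<sigma> p i" "nbhd (ltree E \<sigma>) w = {\<sigma> ! p}"
      using leaf_index w by blast
    moreover have "\<sigma> ! p \<in> set spine"
      using parent_in_spine[OF calculation(1)] set_spine by simp
    ultimately show ?thesis
      by (auto simp: deg_def nbhd_def)
  qed
  show ?thesis
    unfolding search_caterpillar_def Let_def
    using spine_V C_spine leaves leaf_not_adj_later_spine_pos is_path_spine spine_indep_condition
    by blast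
qed

end

lemma search_caterpillar_ltree_if_search_ordering:
  assumes "split_graph V E C I" "connected V E" "search_ordering X V E \<sigma>"
  shows "\<exists>L P. search_caterpillar V E C I (ltree E \<sigma>) L P"
proof -
  have "is_ordering V \<sigma>"
    using assms(3) by (cases X) (simp_all add: mns_ordering_def mcs_ordering_def
        ldfs_ordering_def lbfs_ordering_def)
  then have "\<sigma> \<noteq> []"
    using assms(2) by (auto simp: is_ordering_def connected_def)
  then interpret split_graph_mns_ordering V E C I \<sigma>
    using assms mns_ordering_if_search_ordering by unfold_locales blast+
  show ?thesis
    using search_caterpillar_ltree by blast
qed

section \<open>Realising a caterpillar as an L-tree\<close>

locale search_caterpillar_ordering =
  fixes V :: "'a set" and E T :: "'a set set" and C I L :: "'a set" and P leaves :: "'a list"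
    and X :: search
  assumes split: "split_graph V E C I" and span: "spanning_tree V E T"
    and caterpillar: "search_caterpillar V E C I T L P"
    and distinct_leaves: "distinct leaves" and set_leaves: "set leaves = L"
    and leaves_order: "sorted_wrt (\<lambda>v w. \<not> label_less X (length P + length leaves)
      (earlier_adj E P (length P) v) (earlier_adj E P (length P) w)) leaves"
begin

abbreviation "p \<equiv> length P"

definition \<sigma> :: "'a list" where
  "\<sigma> = P @ leaves"

lemma disjoint: "L \<inter> set P = {}" and cover: "V = L \<union> set P" and path: "is_path T P"
  and leaf: "w \<in> L \<Longrightarrow> deg T w = 1 \<and> (\<exists>v\<in>set P. adj T w v)" and C_path: "C \<subseteq> set P"
  using caterpillar unfolding search_caterpillar_def by simp_all

lemma leaf_no_later_nbr:
  assumes "w \<in> L" "adj T w (P ! i)" "i < j" "j < p"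
  shows "\<not> adj E w (P ! j)"
proof -
  have "i < p" using assms(3,4) by simp
  then show ?thesis
    using caterpillar assms unfolding search_caterpillar_def by blast
qed

lemma path_indep:
  assumes "i < p" "P ! i \<in> I"
  shows "set (take i P) \<inter> C \<subseteq> nbhd E (P ! i)"
    and "{P ! j | j. i < j \<and> j \<le> i + deg E (P ! i) - card (set (take i P) \<inter> C)} \<subseteq> nbhd E (P ! i)"
  using caterpillar assms unfolding search_caterpillar_def Let_def by simp_all

lemma distinct_P: "distinct P"
  using path by (simp add: is_path_def)

lemma adj_E_if_adj_T: "adj T u v \<Longrightarrow> adj E u v"
  using span by (auto simp: spanning_tree_def adj_def)

lemma leaf_indep: "w \<in> L \<Longrightarrow> w \<in> I"
  using C_path disjoint cover split by (auto simp: split_graph_def)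

lemma P_in_V: "i < p \<Longrightarrow> P ! i \<in> V"
  using cover by auto

lemma length_\<sigma>: "length \<sigma> = p + length leaves"
  by (simp add: \<sigma>_def)

lemma is_ordering_\<sigma>: "is_ordering V \<sigma>"
  using distinct_P distinct_leaves set_leaves disjoint cover
  by (auto simp: is_ordering_def \<sigma>_def)

lemma nth_\<sigma>_path: "i < p \<Longrightarrow> \<sigma> ! i = P ! i"
  by (simp add: \<sigma>_def nth_append)

lemma nth_\<sigma>_leaf: "p \<le> i \<Longrightarrow> \<sigma> ! i = leaves ! (i - p)"
  by (simp add: \<sigma>_def nth_append)

lemma nth_\<sigma>_in_L: "p \<le> i \<Longrightarrow> i < length \<sigma> \<Longrightarrow> \<sigma> ! i \<in> L"
  using set_leaves by (auto simp: \<sigma>_def nth_append)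

lemma earlier_adj_leaf:
  assumes "p \<le> i" "i < length \<sigma>" "w \<in> L"
  shows "earlier_adj E \<sigma> i w = earlier_adj E P p w"
proof (intro equalityI subsetI)
  fix j assume "j \<in> earlier_adj E \<sigma> i w"
  then have j: "j < i" "adj E (\<sigma> ! j) w" by (auto simp: earlier_adj_def)
  have "j < p"
  proof (rule ccontr)
    assume "\<not> j < p"
    moreover have "j < length \<sigma>" using j(1) assms(2) by simp
    ultimately have "\<sigma> ! j \<in> L" using nth_\<sigma>_in_L by simp
    then show False
      using j(2) leaf_indep assms(3) split_graph_indep_not_adj[OF split] by blast
  qed
  then show "j \<in> earlier_adj E P p w"
    using j nth_\<sigma>_path by (simp add: earlier_adj_def)
next
  fix j assume "j \<in> earlier_adj E P p w"
  then show "j \<in> earlier_adj E \<sigma> i w"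
    using assms(1) nth_\<sigma>_path by (auto simp: earlier_adj_def)
qed

lemma take_path_inter_C: "j \<le> p \<Longrightarrow> set (take j P) \<inter> C = (!) P ` {t. t < j \<and> P ! t \<in> C}"
  using set_take_eq_image_nth[of j P] by auto

lemma card_take_path_inter_C: "j \<le> p \<Longrightarrow> card (set (take j P) \<inter> C) = card {t. t < j \<and> P ! t \<in> C}"
  unfolding take_path_inter_C by (rule card_image, rule inj_on_nth[OF distinct_P]) auto

text \<open>Counting argument: the earlier clique vertices, the block of the next
  \<open>deg - l\<close> path vertices and a later neighbour beyond that block would give
  \<open>P\<^sub>j\<close> more than \<open>deg\<close> neighbours.\<close>

lemma indep_later_path_nbr_bound:
  assumes "j < k" "k < p" "P ! j \<in> I" "adj E (P ! j) (P ! k)"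
  shows "k \<le> j + deg E (P ! j) - card (set (take j P) \<inter> C)"
proof (rule ccontr)
  define Cj where "Cj = {t. t < j \<and> P ! t \<in> C}"
  define r where "r = deg E (P ! j) - card Cj"
  have "j < p" using assms(1,2) by simp
  have "card Cj \<le> deg E (P ! j)"
    unfolding deg_def Cj_def card_take_path_inter_C[OF less_imp_le[OF \<open>j < p\<close>], symmetric]
    using path_indep(1)[OF \<open>j < p\<close> assms(3)]
    by (rule card_mono[OF finite_nbhd[OF split_graph_graph[OF split]]])
  then have bound: "j + deg E (P ! j) - card (set (take j P) \<inter> C) = j + r"
    unfolding r_def Cj_def card_take_path_inter_C[OF less_imp_le[OF \<open>j < p\<close>]] by simp
  assume "\<not> k \<le> j + deg E (P ! j) - card (set (take j P) \<inter> C)"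
  then have "j + r < k"
    unfolding bound by simp
  have "(!) P ` Cj \<subseteq> nbhd E (P ! j)"
    using path_indep(1)[OF \<open>j < p\<close> assms(3)] take_path_inter_C \<open>j < p\<close> by (simp add: Cj_def)
  moreover have "(!) P ` {j<..j + r} \<subseteq> nbhd E (P ! j)"
    using path_indep(2)[OF \<open>j < p\<close> assms(3)] unfolding bound by fastforce
  ultimately have "(!) P ` (Cj \<union> {j<..j + r} \<union> {k}) \<subseteq> nbhd E (P ! j)"
    using assms(4) by (simp add: nbhd_def image_Un)
  then have "card ((!) P ` (Cj \<union> {j<..j + r} \<union> {k})) \<le> deg E (P ! j)"
    unfolding deg_def by (rule card_mono[OF finite_nbhd[OF split_graph_graph[OF split]]])
  moreover have "card ((!) P ` (Cj \<union> {j<..j + r} \<union> {k})) = card Cj + r + 1"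
  proof -
    have inj: "inj_on ((!) P) (Cj \<union> {j<..j + r} \<union> {k})"
      by (rule inj_on_nth[OF distinct_P]) (use \<open>j + r < k\<close> assms(2) in \<open>auto simp: Cj_def\<close>)
    have "finite Cj" "Cj \<inter> {j<..j + r} = {}" "k \<notin> Cj \<union> {j<..j + r}"
      using \<open>j + r < k\<close> by (auto simp: Cj_def)
    then show ?thesis
      using card_image[OF inj] card_Un_disjoint[of Cj "{j<..j + r}"] by simp
  qed
  ultimately show False
    unfolding r_def using \<open>card Cj \<le> deg E (P ! j)\<close> by linarith
qed

lemma earlier_path_nbr_adj:
  assumes "j < i" "i < p" "i \<le> k" "k < length \<sigma>" "adj E (P ! j) (\<sigma> ! k)"
  shows "adj E (P ! j) (P ! i)"
proof (cases "P ! j \<in> C")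
  case True
  show ?thesis
  proof (cases "P ! i \<in> C")
    case True
    have "P ! j \<noteq> P ! i"
      using distinct_P assms(1,2) by (simp add: nth_eq_iff_index_eq)
    then show ?thesis
      using split_graph_clique_adj[OF split \<open>P ! j \<in> C\<close> True] by simp
  next
    case False
    then have "P ! i \<in> I"
      using split_graph_C_iff_not_I[OF split P_in_V[OF assms(2)]] by simp
    moreover have "P ! j \<in> set (take i P) \<inter> C"
      using \<open>P ! j \<in> C\<close> assms(1,2) set_take_eq_image_nth[of i P] by simp
    ultimately show ?thesis
      using path_indep[OF assms(2)] by (auto simp: nbhd_def adj_commute)
  qed
next
  case False
  then have j_I: "P ! j \<in> I"
    using split_graph_C_iff_not_I[OF split P_in_V] assms(1,2) by simp
  then have "\<sigma> ! k \<in> C"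
    using split_graph_adj_indep[OF split assms(5)] by simp
  have "k < p"
  proof (rule ccontr)
    assume "\<not> k < p"
    then have "\<sigma> ! k \<in> I"
      using nth_\<sigma>_in_L[of k] assms(4) leaf_indep by simp
    then show False
      using \<open>\<sigma> ! k \<in> C\<close> split by (auto simp: split_graph_def)
  qed
  then have "adj E (P ! j) (P ! k)"
    using assms(5) nth_\<sigma>_path by simp
  then have "k \<le> j + deg E (P ! j) - card (set (take j P) \<inter> C)"
    using indep_later_path_nbr_bound assms(1,3) \<open>k < p\<close> j_I by simp
  then have "P ! i \<in> {P ! t | t. j < t \<and> t \<le> j + deg E (P ! j) - card (set (take j P) \<inter> C)}"
    using assms(1,3) by auto
  then have "P ! i \<in> nbhd E (P ! j)"
    using path_indep(2)[OF _ j_I] assms(1,2) by auto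
  then show ?thesis
    by (simp add: nbhd_def)
qed

lemma no_later_label_preferred:
  assumes "0 < i" "i \<le> k" "k < length \<sigma>"
  shows "\<not> label_less X (length \<sigma>) (earlier_adj E \<sigma> i (\<sigma> ! i)) (earlier_adj E \<sigma> i (\<sigma> ! k))"
proof (cases "i < p")
  case True
  have "earlier_adj E \<sigma> i (\<sigma> ! k) \<subseteq> earlier_adj E \<sigma> i (\<sigma> ! i)"
    using earlier_path_nbr_adj[OF _ True assms(2,3)] True nth_\<sigma>_path
    by (auto simp: earlier_adj_def)
  moreover have "earlier_adj E \<sigma> i (\<sigma> ! i) \<subseteq> {..<length \<sigma>}"
    using earlier_adj_subset[of E \<sigma> i] assms by fastforce
  ultimately show ?thesis
    by (rule not_label_less_if_subset)
next
  case False
  then have "p \<le> i" "p \<le> k" "i < length \<sigma>"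
    using assms(2,3) by simp_all
  have "earlier_adj E \<sigma> i (\<sigma> ! i) = earlier_adj E P p (leaves ! (i - p))"
    using earlier_adj_leaf[OF \<open>p \<le> i\<close> \<open>i < length \<sigma>\<close> nth_\<sigma>_in_L[OF \<open>p \<le> i\<close> \<open>i < length \<sigma>\<close>]]
    unfolding nth_\<sigma>_leaf[OF \<open>p \<le> i\<close>] .
  moreover have "earlier_adj E \<sigma> i (\<sigma> ! k) = earlier_adj E P p (leaves ! (k - p))"
    using earlier_adj_leaf[OF \<open>p \<le> i\<close> \<open>i < length \<sigma>\<close> nth_\<sigma>_in_L[OF \<open>p \<le> k\<close> assms(3)]]
    unfolding nth_\<sigma>_leaf[OF \<open>p \<le> k\<close>] .
  moreover have "i - p \<le> k - p" "k - p < length leaves"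
    using assms False by (simp_all add: length_\<sigma>)
  moreover have "\<not> label_less X (p + length leaves)
      (earlier_adj E P p (leaves ! (i - p))) (earlier_adj E P p (leaves ! (k - p)))"
    using sorted_wrt_nth_less[OF leaves_order, of "i - p" "k - p"] label_less_irrefl
      \<open>i - p \<le> k - p\<close> \<open>k - p < length leaves\<close> by (cases "i - p = k - p") simp_all
  ultimately show ?thesis
    by (simp add: length_\<sigma>)
qed

lemma search_ordering_\<sigma>: "search_ordering X V E \<sigma>"
proof -
  have "\<sigma> \<noteq> []"
    using path by (simp add: \<sigma>_def is_path_def)
  then show ?thesis
    unfolding search_ordering_iff_label_less[OF \<open>\<sigma> \<noteq> []\<close>]
    using is_ordering_\<sigma> no_later_label_preferred by blast
qed

lemma graph_T: "graph V T" and acyclic_T: "\<not> has_cycle T"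
  using span by (auto simp: spanning_tree_def is_tree_def)

lemma path_no_chord:
  assumes "a < b" "b < p" "adj T (P ! a) (P ! b)"
  shows "b = Suc a"
proof (rule ccontr)
  assume "b \<noteq> Suc a"
  define c where "c = take (b - a + 1) (drop a P)"
  have len: "length c = b - a + 1"
    using assms(1,2) by (simp add: c_def)
  have nth_c: "c ! t = P ! (a + t)" if "t \<le> b - a" for t
    using that assms(1,2) by (simp add: c_def)
  have "is_path T c"
    unfolding is_path_def
  proof (intro conjI allI impI)
    show "c \<noteq> []" using len by auto
    show "distinct c" using distinct_P by (simp add: c_def)
    fix t assume "Suc t < length c"
    moreover have "Suc (a + t) < p" using calculation len assms(2) by simp
    ultimately show "adj T (c ! t) (c ! Suc t)"
      using path nth_c[of t] nth_c[of "Suc t"] len by (simp add: is_path_def)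
  qed
  moreover have "adj T (last c) (hd c)"
  proof -
    have "c \<noteq> []" using len by auto
    then have "last c = P ! b" "hd c = P ! a"
      using nth_c[of 0] nth_c[of "b - a"] len assms(1) by (simp_all add: last_conv_nth hd_conv_nth)
    then show ?thesis
      using assms(3) by (simp add: adj_commute)
  qed
  moreover have "3 \<le> length c"
    using len \<open>b \<noteq> Suc a\<close> assms(1) by simp
  ultimately show False
    using acyclic_T by (auto simp: has_cycle_def)
qed

lemma ltree_parent_path:
  assumes "0 < i" "i < p"
  shows "ltree_parent E \<sigma> (i - 1) i"
proof -
  have "Suc (i - 1) = i" using assms(1) by simp
  then have "adj T (P ! (i - 1)) (P ! i)"
    using path assms(2) unfolding is_path_def by (metis lessI)
  then show ?thesis
    using adj_E_if_adj_T assms nth_\<sigma>_path by (auto simp: ltree_parent_def length_\<sigma>)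
qed

lemma leaf_nbhd:
  assumes "w \<in> L"
  obtains m where "m < p" "nbhd T w = {P ! m}"
proof -
  obtain m where m: "m < p" "adj T w (P ! m)"
    using leaf[OF assms] by (metis in_set_conv_nth)
  have "card (nbhd T w) = 1"
    using leaf[OF assms] by (simp add: deg_def)
  then obtain u where "nbhd T w = {u}"
    by (rule card_1_singletonE)
  moreover have "P ! m \<in> nbhd T w"
    using m(2) by (simp add: nbhd_def)
  ultimately show ?thesis
    using that m(1) by simp
qed

lemma ltree_parent_leaf:
  assumes "p \<le> i" "i < length \<sigma>" "m < p" "adj T (\<sigma> ! i) (P ! m)"
  shows "ltree_parent E \<sigma> m i"
proof -
  have w: "\<sigma> ! i \<in> L"
    using nth_\<sigma>_in_L assms(1,2) by simp
  have "adj E (\<sigma> ! m) (\<sigma> ! i)"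
    using adj_E_if_adj_T[OF assms(4)] nth_\<sigma>_path[OF assms(3)] by (simp add: adj_commute)
  moreover have "\<not> adj E (\<sigma> ! k) (\<sigma> ! i)" if "m < k" "k < i" for k
  proof (cases "k < p")
    case True
    then show ?thesis
      using leaf_no_later_nbr[OF w assms(4) that(1) True] nth_\<sigma>_path by (simp add: adj_commute)
  next
    case False
    then have "\<sigma> ! k \<in> L"
      using nth_\<sigma>_in_L that(2) assms(2) by simp
    then show ?thesis
      using w leaf_indep split_graph_indep_not_adj[OF split] by blast
  qed
  ultimately show ?thesis
    using assms by (auto simp: ltree_parent_def)
qed

lemma ltree_subset: "ltree E \<sigma> \<subseteq> T"
proof
  fix e assume "e \<in> ltree E \<sigma>"
  then obtain i j where e: "e = {\<sigma> ! i, \<sigma> ! j}" and parent: "ltree_parent E \<sigma> j i"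
    unfolding mem_ltree_iff by blast
  have "j < i" "i < length \<sigma>"
    using parent by (auto simp: ltree_parent_def)
  show "e \<in> T"
  proof (cases "i < p")
    case True
    then have "j = i - 1"
      using ltree_parent_unique[OF parent ltree_parent_path] \<open>j < i\<close> by simp
    moreover have "Suc (i - 1) = i"
      using \<open>j < i\<close> by simp
    ultimately have "adj T (P ! j) (P ! i)"
      using path True unfolding is_path_def by (metis lessI)
    then show ?thesis
      using e nth_\<sigma>_path True \<open>j < i\<close> by (simp add: adj_def insert_commute)
  next
    case False
    then have "\<sigma> ! i \<in> L"
      using nth_\<sigma>_in_L \<open>i < length \<sigma>\<close> by simp
    then obtain m where m: "m < p" "nbhd T (\<sigma> ! i) = {P ! m}"
      by (rule leaf_nbhd)
    then have "adj T (\<sigma> ! i) (P ! m)"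
      by (simp add: nbhd_def set_eq_iff)
    then have "j = m"
      using ltree_parent_unique[OF parent ltree_parent_leaf] False \<open>i < length \<sigma>\<close> m(1) by simp
    then show ?thesis
      using e \<open>adj T (\<sigma> ! i) (P ! m)\<close> nth_\<sigma>_path m(1) by (simp add: adj_def)
  qed
qed

lemma leaf_edge_in_ltree:
  assumes "w \<in> L" "adj T w y"
  shows "{w, y} \<in> ltree E \<sigma>"
proof -
  obtain m where m: "m < p" "nbhd T w = {P ! m}"
    using leaf_nbhd assms(1) by blast
  then have "y = P ! m"
    using assms(2) by (auto simp: nbhd_def)
  obtain q where q: "q < length leaves" "leaves ! q = w"
    using assms(1) set_leaves by (metis in_set_conv_nth)
  define i where "i = p + q"
  have i: "p \<le> i" "i < length \<sigma>" "\<sigma> ! i = w"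
    using q by (simp_all add: i_def length_\<sigma> nth_\<sigma>_leaf)
  then have "ltree_parent E \<sigma> m i"
    using ltree_parent_leaf assms(2) \<open>y = P ! m\<close> m(1) by simp
  moreover have "{w, y} = {\<sigma> ! i, \<sigma> ! m}"
    using i(3) \<open>y = P ! m\<close> nth_\<sigma>_path[OF m(1)] by simp
  ultimately show ?thesis
    unfolding mem_ltree_iff by blast
qed

lemma path_edge_in_ltree:
  assumes "a < b" "b < p" "adj T (P ! a) (P ! b)"
  shows "{P ! a, P ! b} \<in> ltree E \<sigma>"
proof -
  have "ltree_parent E \<sigma> a b"
    using ltree_parent_path[of b] path_no_chord[OF assms] assms(2) by simp
  moreover have "{P ! a, P ! b} = {\<sigma> ! b, \<sigma> ! a}"
    using nth_\<sigma>_path assms(1,2) by (simp add: insert_commute)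
  ultimately show ?thesis
    unfolding mem_ltree_iff by blast
qed

lemma ltree_eq: "ltree E \<sigma> = T"
proof (rule antisym[OF ltree_subset subsetI])
  fix e assume "e \<in> T"
  then obtain x y where e: "e = {x, y}" "x \<noteq> y" "x \<in> V" "y \<in> V"
    using graph_T by (auto simp: graph_def)
  then have xy: "adj T x y" "adj T y x"
    using \<open>e \<in> T\<close> by (auto simp: adj_def insert_commute)
  have "x \<in> L \<union> set P" "y \<in> L \<union> set P"
    using e(3,4) cover by simp_all
  then consider "x \<in> L" | "y \<in> L" | "x \<in> set P" "y \<in> set P"
    by blast
  then show "e \<in> ltree E \<sigma>"
  proof cases
    case 1
    then show ?thesis using leaf_edge_in_ltree[OF 1 xy(1)] e(1) by simp
  next
    case 2
    then show ?thesis using leaf_edge_in_ltree[OF 2 xy(2)] e(1) by (simp add: insert_commute)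
  next
    case 3
    then obtain a b where ab: "a < p" "b < p" "x = P ! a" "y = P ! b"
      by (metis in_set_conv_nth)
    then have "a \<noteq> b" using e(2) by auto
    then consider "a < b" | "b < a" by linarith
    then show ?thesis
    proof cases
      case 1
      then show ?thesis using path_edge_in_ltree[OF 1 ab(2)] xy(1) ab(3,4) e(1) by simp
    next
      case 2
      then show ?thesis
        using path_edge_in_ltree[OF 2 ab(1)] xy(2) ab(3,4) e(1) by (simp add: insert_commute)
    qed
  qed
qed

end

lemma search_ordering_if_search_caterpillar:
  assumes "split_graph V E C I" "spanning_tree V E T" "search_caterpillar V E C I T L P"
  shows "\<exists>\<sigma>. search_ordering X V E \<sigma> \<and> ltree E \<sigma> = T"
proof -
  define R where "R v w \<longleftrightarrow> label_less X (length P + card L)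
    (earlier_adj E P (length P) v) (earlier_adj E P (length P) w)" for v w
  have "finite V"
    using assms(1) by (simp add: split_graph_def graph_def)
  moreover have "L \<subseteq> V"
    using assms(3) by (auto simp: search_caterpillar_def)
  ultimately have "finite L"
    by (rule finite_subset[rotated])
  moreover have "irreflp R" "transp R"
    unfolding R_def by (auto intro!: irreflpI transpI label_less_irrefl elim: label_less_trans)
  ultimately obtain leaves where leaves: "distinct leaves" "set leaves = L"
    "sorted_wrt (\<lambda>v w. \<not> R v w) leaves"
    using ex_enumeration_maximal_first by blast
  then have "length leaves = card L"
    by (metis distinct_card)
  then interpret search_caterpillar_ordering V E T C I L P leaves X
    using assms leaves by unfold_locales (simp_all add: R_def)
  show ?thesis
    using search_ordering_\<sigma> ltree_eq by blast
qed

theorem theorem5: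
  fixes V C I :: "'a set" and E T :: "'a set set" and X :: search
  assumes "split_graph V E C I" and "connected V E" and "spanning_tree V E T"
  shows "(\<exists>\<sigma>. search_ordering X V E \<sigma> \<and> ltree E \<sigma> = T) \<longleftrightarrow>
    (\<exists>L P. L \<inter> set P = {} \<and> V = L \<union> set P \<and> is_path T P \<and>
       (\<forall>w\<in>L. deg T w = 1 \<and> (\<exists>v\<in>set P. adj T w v)) \<and> C \<subseteq> set P \<and>
       (\<forall>w\<in>L. \<forall>i<length P. adj T w (P ! i) \<longrightarrow>
          (\<forall>j. i < j \<and> j < length P \<longrightarrow> \<not> adj E w (P ! j))) \<and>
       (\<forall>i<length P. P ! i \<in> I \<longrightarrow>
          (let l = card (set (take i P) \<inter> C) in
             set (take i P) \<inter> C \<subseteq> nbhd E (P ! i) \<and>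
             {P ! j | j. i < j \<and> j \<le> i + deg E (P ! i) - l} \<subseteq> nbhd E (P ! i))))"
  unfolding search_caterpillar_def[symmetric]
proof
  assume "\<exists>\<sigma>. search_ordering X V E \<sigma> \<and> ltree E \<sigma> = T"
  then show "\<exists>L P. search_caterpillar V E C I T L P"
    using search_caterpillar_ltree_if_search_ordering[OF assms(1,2)] by blast
next
  assume "\<exists>L P. search_caterpillar V E C I T L P"
  then show "\<exists>\<sigma>. search_ordering X V E \<sigma> \<and> ltree E \<sigma> = T"
    using search_ordering_if_search_caterpillar[OF assms(1,3)] by blast
qed

end
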